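(* Let $V$ be a finite nonempty set and $f:\{0,1\}^V\to\{0,1\}^V$. (1) $f$ is positive-circular if and only if $f$ is even-self-dual and non-expansive. (2) $f$ is negative-circular if and only if $f$ is odd-self-dual and non-expansive.
   Context: For $x,y\in\{0,1\}^V$, $x\oplus y$ is componentwise addition mod 2, $1$ is the all-ones point, $\|x\|$ is the number of $1$s of $x$, $d(x,y)=\|x\oplus y\|$; $x$ is even (odd) if $\|x\|$ is even (odd). $f$ is non-expansive if $d(f(x),f(y))\le d(x,y)$ for all $x,y$. The conjugate is $\tilde f(x)=f(x)\oplus x$. $f$ is self-dual if $f(x\oplus1)=f(x)\oplus1$ for all $x$; even (odd) if $\tilde f(\{0,1\}^V)$ is exactly the set of even (odd) points; even-self-dual (odd-self-dual) if both even (odd) and self-dual. For $x^{j\alpha}$ the point equal to $x$ except its $j$-component is $\alpha$, the global interaction graph $G(f)$ is the signed digraph on $V$ with a positive (resp. negative) arc from $j$ to $i$ iff $f_i(x^{j1})-f_i(x^{j0})=1$ (resp. $=-1$) for at least one $x$ (so there may be both a positive and a negative arc from $j$ to $i$; loops allowed). A cycle is a subgraph with at most one arc between any ordered pair of vertices whose underlying unsigned digraph is a directed cycle; it is positive (negative) if it has an even (odd) number of negative arcs. $f$ is positive-circular (negative-circular) if $G(f)$ itself is a positive (negative) cycle (passing through all vertices of $V$). *)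

theory Defs
  imports Main
begin

text \<open>Points of {0,1}^V are functions V => bool, with V a finite type (nonempty automatically).\<close>

definition bxor :: "('v \<Rightarrow> bool) \<Rightarrow> ('v \<Rightarrow> bool) \<Rightarrow> ('v \<Rightarrow> bool)" where
  "bxor x y = (\<lambda>i. x i \<noteq> y i)"

definition ones :: "'v \<Rightarrow> bool" where
  "ones = (\<lambda>i. True)"

definition wt :: "('v::finite \<Rightarrow> bool) \<Rightarrow> nat" where
  "wt x = card {i. x i}"

definition hdist :: "('v::finite \<Rightarrow> bool) \<Rightarrow> ('v \<Rightarrow> bool) \<Rightarrow> nat" where
  "hdist x y = wt (bxor x y)"

definition non_expansive :: "(('v::finite \<Rightarrow> bool) \<Rightarrow> ('v \<Rightarrow> bool)) \<Rightarrow> bool" where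
  "non_expansive f \<longleftrightarrow> (\<forall>x y. hdist (f x) (f y) \<le> hdist x y)"

definition conjugate :: "(('v \<Rightarrow> bool) \<Rightarrow> ('v \<Rightarrow> bool)) \<Rightarrow> ('v \<Rightarrow> bool) \<Rightarrow> ('v \<Rightarrow> bool)" where
  "conjugate f x = bxor (f x) x"

definition self_dual :: "(('v \<Rightarrow> bool) \<Rightarrow> ('v \<Rightarrow> bool)) \<Rightarrow> bool" where
  "self_dual f \<longleftrightarrow> (\<forall>x. f (bxor x ones) = bxor (f x) ones)"

definition even_map :: "(('v::finite \<Rightarrow> bool) \<Rightarrow> ('v \<Rightarrow> bool)) \<Rightarrow> bool" where
  "even_map f \<longleftrightarrow> range (conjugate f) = {x. even (wt x)}"

definition odd_map :: "(('v::finite \<Rightarrow> bool) \<Rightarrow> ('v \<Rightarrow> bool)) \<Rightarrow> bool" where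
  "odd_map f \<longleftrightarrow> range (conjugate f) = {x. odd (wt x)}"

definition even_self_dual :: "(('v::finite \<Rightarrow> bool) \<Rightarrow> ('v \<Rightarrow> bool)) \<Rightarrow> bool" where
  "even_self_dual f \<longleftrightarrow> even_map f \<and> self_dual f"

definition odd_self_dual :: "(('v::finite \<Rightarrow> bool) \<Rightarrow> ('v \<Rightarrow> bool)) \<Rightarrow> bool" where
  "odd_self_dual f \<longleftrightarrow> odd_map f \<and> self_dual f"

text \<open>Global interaction graph: set of signed arcs (j, i, s), s = True positive, s = False negative.
  f_i(x^{j1}) - f_i(x^{j0}) = 1 means f_i(x^{j1}) true and f_i(x^{j0}) false.\<close>

definition interaction_graph :: "(('v \<Rightarrow> bool) \<Rightarrow> ('v \<Rightarrow> bool)) \<Rightarrow> ('v \<times> 'v \<times> bool) set" where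
  "interaction_graph f =
     {(j, i, True) | j i. \<exists>x. f (x(j := True)) i \<and> \<not> f (x(j := False)) i} \<union>
     {(j, i, False) | j i. \<exists>x. \<not> f (x(j := True)) i \<and> f (x(j := False)) i}"

text \<open>A signed arc set is a cycle through all vertices: at most one arc per ordered pair and the
  underlying unsigned digraph is a directed cycle visiting every vertex (a loop if |V| = 1).\<close>

definition hamiltonian_signed_cycle :: "('v \<times> 'v \<times> bool) set \<Rightarrow> bool" where
  "hamiltonian_signed_cycle A \<longleftrightarrow>
     (\<forall>j i. \<not> ((j, i, True) \<in> A \<and> (j, i, False) \<in> A)) \<and>
     (\<exists>vs. distinct vs \<and> set vs = UNIV \<and>
        {(j, i). \<exists>s. (j, i, s) \<in> A} = {(vs ! k, vs ! (Suc k mod length vs)) | k. k < length vs})"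

definition negative_arcs :: "('v \<times> 'v \<times> bool) set \<Rightarrow> ('v \<times> 'v) set" where
  "negative_arcs A = {(j, i). (j, i, False) \<in> A}"

definition positive_circular :: "(('v::finite \<Rightarrow> bool) \<Rightarrow> ('v \<Rightarrow> bool)) \<Rightarrow> bool" where
  "positive_circular f \<longleftrightarrow> hamiltonian_signed_cycle (interaction_graph f) \<and>
     even (card (negative_arcs (interaction_graph f)))"

definition negative_circular :: "(('v::finite \<Rightarrow> bool) \<Rightarrow> ('v \<Rightarrow> bool)) \<Rightarrow> bool" where
  "negative_circular f \<longleftrightarrow> hamiltonian_signed_cycle (interaction_graph f) \<and>
     odd (card (negative_arcs (interaction_graph f)))"

end

theory Submission
  imports Defs "HOL-Combinatorics.Cycles"
begin

text \<open>
  A self-dual non-expansive map is an isometry of the cube: d(f x, f (x \<oplus> 1)) = n forces equality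
  in the triangle inequality through f y. Isometries of the cube are the maps x \<mapsto> (x \<circ> p) \<oplus> c
  with p a permutation, since the unit vectors must go to the neighbours of f 0. If G(f) is a cycle
  through all vertices and p(i) is the predecessor of i, then f i depends on x (p i) only, so f
  has the same form.

  For f x = (x \<circ> p) \<oplus> c the graph G(f) consists of the arcs p(i) \<rightarrow> i, negative exactly
  where c i holds: it is a Hamiltonian cycle iff p is a single cycle, and it has \<parallel>c\<parallel> negative
  arcs. The conjugate x \<mapsto> (x \<circ> p) \<oplus> x \<oplus> c takes values in the parity class of c,
  and its fibres are translates of the space of p-invariant points; counting shows that it
  covers the whole class iff the only p-invariant points are 0 and 1, i.e. iff p is a single cycle.
\<close>


lemma hdist_eq_card: "hdist x y = card {i. x i \<noteq> y i}"
  by (simp add: hdist_def wt_def bxor_def)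

lemma hdist_commute: "hdist x y = hdist y x"
  unfolding hdist_eq_card by (rule arg_cong[where f = card]) auto

lemma hdist_self: "hdist x x = 0"
  by (simp add: hdist_eq_card)

lemma hdist_triangle: "hdist x z \<le> hdist x y + hdist y z"
proof -
  have "card {i. x i \<noteq> z i} \<le> card ({i. x i \<noteq> y i} \<union> {i. y i \<noteq> z i})"
    by (rule card_mono) auto
  also have "\<dots> \<le> card {i. x i \<noteq> y i} + card {i. y i \<noteq> z i}"
    by (rule card_Un_le)
  finally show ?thesis
    unfolding hdist_eq_card .
qed

lemma hdist_le_card: "hdist x (y :: 'v::finite \<Rightarrow> bool) \<le> card (UNIV :: 'v set)"
  unfolding hdist_eq_card by (rule card_mono) auto

lemma hdist_bxor_ones: "hdist x (bxor y ones) = card (UNIV :: 'v set) - hdist x (y :: 'v::finite \<Rightarrow> bool)"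
proof -
  have "{i. x i \<noteq> bxor y ones i} = UNIV - {i. x i \<noteq> y i}"
    by (auto simp: bxor_def ones_def)
  then show ?thesis
    unfolding hdist_eq_card by (simp add: card_Diff_subset)
qed

lemma hdist_fun_upd_Not:
  "hdist a (b(k := \<not> b k)) = (if a k = b k then Suc (hdist a b) else hdist a b - 1)"
proof (cases "a k = b k")
  case True
  then have "{i. a i \<noteq> (b(k := \<not> b k)) i} = insert k {i. a i \<noteq> b i}"
    by auto
  with True show ?thesis
    unfolding hdist_eq_card by simp
next
  case False
  then have "{i. a i \<noteq> b i} = insert k {i. a i \<noteq> (b(k := \<not> b k)) i}"
    by auto
  with False show ?thesis
    unfolding hdist_eq_card by simp
qed

lemma self_dual_non_expansive_imp_isometry:
  fixes f :: "('v::finite \<Rightarrow> bool) \<Rightarrow> ('v \<Rightarrow> bool)"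
  assumes "self_dual f" and "non_expansive f"
  shows "hdist (f x) (f y) = hdist x y"
proof -
  have "card (UNIV :: 'v set) = hdist (f x) (f (bxor x ones))"
    using \<open>self_dual f\<close> by (simp add: self_dual_def hdist_bxor_ones hdist_self)
  also have "\<dots> \<le> hdist (f x) (f y) + hdist (f y) (f (bxor x ones))"
    by (rule hdist_triangle)
  also have "\<dots> \<le> hdist (f x) (f y) + hdist y (bxor x ones)"
    using \<open>non_expansive f\<close> by (simp add: non_expansive_def)
  also have "\<dots> = hdist (f x) (f y) + (card (UNIV :: 'v set) - hdist x y)"
    by (simp add: hdist_bxor_ones hdist_commute)
  finally have "card (UNIV :: 'v set) \<le> hdist (f x) (f y) + (card (UNIV :: 'v set) - hdist x y)" .
  moreover have "hdist (f x) (f y) \<le> hdist x y"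
    using \<open>non_expansive f\<close> by (simp add: non_expansive_def)
  ultimately show ?thesis
    using hdist_le_card[of x y] by linarith
qed

section \<open>Isometries of the cube\<close>

definition perm_xor :: "('v \<Rightarrow> 'v) \<Rightarrow> ('v \<Rightarrow> bool) \<Rightarrow> ('v \<Rightarrow> bool) \<Rightarrow> ('v \<Rightarrow> bool)" where
  "perm_xor p c x = (\<lambda>i. x (p i) \<noteq> c i)"

lemma isometry_unit_vector:
  fixes f :: "('v::finite \<Rightarrow> bool) \<Rightarrow> ('v \<Rightarrow> bool)"
  assumes iso: "\<And>x y. hdist (f x) (f y) = hdist x y"
  shows "\<exists>k. f ((\<lambda>_. False)(j := True)) = (f (\<lambda>_. False))(k := \<not> f (\<lambda>_. False) k)"
proof -
  let ?c = "f (\<lambda>_. False)" and ?e = "(\<lambda>_. False)(j := True)"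
  have "card {i. f ?e i \<noteq> ?c i} = hdist ?e (\<lambda>_. False)"
    using iso[of ?e "\<lambda>_. False"] by (simp add: hdist_eq_card)
  also have "\<dots> = 1"
    by (simp add: hdist_eq_card)
  finally obtain k where "{i. f ?e i \<noteq> ?c i} = {k}"
    by (rule card_1_singletonE)
  then have "f ?e = ?c(k := \<not> ?c k)"
    by (auto simp: fun_eq_iff)
  then show ?thesis ..
qed

lemma isometry_coordinate:
  fixes f :: "('v::finite \<Rightarrow> bool) \<Rightarrow> ('v \<Rightarrow> bool)"
  assumes iso: "\<And>x y. hdist (f x) (f y) = hdist x y"
    and unit: "f ((\<lambda>_. False)(j := True)) = c(k := \<not> c k)"
    and c: "c = f (\<lambda>_. False)"
  shows "f x k = (x j \<noteq> c k)"
proof -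
  let ?d = "hdist x (\<lambda>_. False)"
  have "(if f x k = c k then Suc ?d else ?d - 1) = hdist (f x) (c(k := \<not> c k))"
    using hdist_fun_upd_Not[of "f x" c k] iso c by simp
  also have "\<dots> = hdist x ((\<lambda>_. False)(j := \<not> False))"
    using iso[of x "(\<lambda>_. False)(j := True)"] unit by simp
  also have "\<dots> = (if x j = False then Suc ?d else ?d - 1)"
    by (rule hdist_fun_upd_Not)
  finally show ?thesis
    by (cases "x j"; cases "f x k = c k") simp_all
qed

lemma isometry_imp_perm_xor:
  fixes f :: "('v::finite \<Rightarrow> bool) \<Rightarrow> ('v \<Rightarrow> bool)"
  assumes iso: "\<And>x y. hdist (f x) (f y) = hdist x y"
  obtains p c where "bij p" and "f = perm_xor p c"
proof -
  define c where "c = f (\<lambda>_. False)"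
  obtain \<sigma> where unit: "\<And>j. f ((\<lambda>_. False)(j := True)) = c(\<sigma> j := \<not> c (\<sigma> j))"
    using isometry_unit_vector[OF iso] unfolding c_def by metis
  have coord: "f x (\<sigma> j) = (x j \<noteq> c (\<sigma> j))" for x j
    using iso unit c_def by (rule isometry_coordinate)
  have "inj \<sigma>"
  proof (rule injI)
    fix j j' assume "\<sigma> j = \<sigma> j'"
    then show "j = j'"
      using coord[of "(\<lambda>_. False)(j := True)" j] coord[of "(\<lambda>_. False)(j := True)" j']
      by (cases "j = j'") simp_all
  qed
  then have "bij \<sigma>"
    by (simp add: bij_def finite_UNIV_inj_surj)
  have "f = perm_xor (inv \<sigma>) c"
  proof (intro ext)
    fix x i
    have "\<sigma> (inv \<sigma> i) = i"
      using \<open>bij \<sigma>\<close> by (simp add: bij_is_surj surj_f_inv_f)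
    then show "f x i = perm_xor (inv \<sigma>) c x i"
      using coord[of x "inv \<sigma> i"] by (simp add: perm_xor_def)
  qed
  with \<open>bij \<sigma>\<close> show thesis
    using bij_imp_bij_inv that by blast
qed

section \<open>Maps whose interaction graph is a Hamiltonian cycle\<close>

lemma interaction_arc_iff:
  "(\<exists>s. (j, i, s) \<in> interaction_graph f) \<longleftrightarrow> (\<exists>x. f (x(j := True)) i \<noteq> f (x(j := False)) i)"
  unfolding interaction_graph_def by auto

lemma eq_if_insensitive_outside:
  fixes g :: "('v::finite \<Rightarrow> bool) \<Rightarrow> 'b"
  assumes insensitive: "\<And>x k. k \<noteq> j \<Longrightarrow> g (x(k := True)) = g (x(k := False))"
    and "x j = y j"
  shows "g x = g y"
proof -
  have upd: "g (x(k := b)) = g x" if "k \<noteq> j" for x k b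
  proof -
    have "g (x(k := b)) = g (x(k := x k))"
      using insensitive[OF that] by (cases b; cases "x k") simp_all
    then show ?thesis
      by simp
  qed
  have "g x = g y" if "finite D" "{k. x k \<noteq> y k} = D" "x j = y j" for D x
    using that
  proof (induction D arbitrary: x rule: finite_induct)
    case empty
    then have "x = y"
      by auto
    then show ?case
      by simp
  next
    case (insert a D)
    have "a \<in> {k. x k \<noteq> y k}"
      using insert.prems(1) by simp
    then have "a \<noteq> j"
      using insert.prems(2) by auto
    have "{k. (x(a := y a)) k \<noteq> y k} = {k. x k \<noteq> y k} - {a}"
      by auto
    also have "\<dots> = D"
      using insert.prems(1) insert.hyps(2) by simp
    finally have "g (x(a := y a)) = g y"
      using insert.IH insert.prems(2) \<open>a \<noteq> j\<close> by simp
    then show ?case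
      using upd[OF \<open>a \<noteq> j\<close>] by simp
  qed
  from this[of "{k. x k \<noteq> y k}" x] assms(2) show ?thesis
    by simp
qed

lemma boolean_function_of_one_coordinate:
  fixes g :: "('v::finite \<Rightarrow> bool) \<Rightarrow> bool"
  assumes insensitive: "\<And>x k. k \<noteq> j \<Longrightarrow> g (x(k := True)) = g (x(k := False))"
    and sensitive: "g (z(j := True)) \<noteq> g (z(j := False))"
  shows "g x = (x j \<noteq> g (\<lambda>_. False))"
proof -
  have reduce: "g x = g ((\<lambda>_. False)(j := x j))" for x
    using eq_if_insensitive_outside[where g = g and j = j and x = x and y = "(\<lambda>_. False)(j := x j)"]
      insensitive by simp
  have "(\<lambda>_. False)(j := False) = (\<lambda>_. False)"
    by auto
  then have "g ((\<lambda>_. False)(j := True)) \<noteq> g (\<lambda>_. False)"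
    using sensitive reduce[of "z(j := True)"] reduce[of "z(j := False)"] by simp
  then show ?thesis
    using reduce[of x] reduce[of "\<lambda>_. False"] by (cases "x j") auto
qed

lemma cycle_of_list_graph:
  assumes "distinct vs"
  shows "{(vs ! k, vs ! (Suc k mod length vs)) | k. k < length vs} = (\<lambda>j. (j, cycle_of_list vs j)) ` set vs"
proof -
  have "map (cycle_of_list vs) vs = rotate1 vs"
    using cyclic_rotation[OF assms, of 1] by simp
  then have step: "vs ! (Suc k mod length vs) = cycle_of_list vs (vs ! k)" if "k < length vs" for k
    using nth_rotate1[OF that] nth_map[OF that, of "cycle_of_list vs"] by simp
  show ?thesis
  proof (intro set_eqI iffI)
    fix z assume "z \<in> {(vs ! k, vs ! (Suc k mod length vs)) | k. k < length vs}"
    then obtain k where "k < length vs" and "z = (vs ! k, vs ! (Suc k mod length vs))"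
      by blast
    then show "z \<in> (\<lambda>j. (j, cycle_of_list vs j)) ` set vs"
      using step by (simp add: rev_image_eqI)
  next
    fix z assume "z \<in> (\<lambda>j. (j, cycle_of_list vs j)) ` set vs"
    then obtain k where "k < length vs" and "z = (vs ! k, cycle_of_list vs (vs ! k))"
      by (auto simp: in_set_conv_nth)
    moreover from this have "z = (vs ! k, vs ! (Suc k mod length vs))"
      using step by simp
    ultimately show "z \<in> {(vs ! k, vs ! (Suc k mod length vs)) | k. k < length vs}"
      by blast
  qed
qed

lemma hamiltonian_signed_cycle_iff:
  "hamiltonian_signed_cycle A \<longleftrightarrow>
     (\<forall>j i. \<not> ((j, i, True) \<in> A \<and> (j, i, False) \<in> A)) \<and>
     (\<exists>vs. distinct vs \<and> set vs = UNIV \<and>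
        (\<forall>j i. (\<exists>s. (j, i, s) \<in> A) \<longleftrightarrow> i = cycle_of_list vs j))"
proof -
  have graph: "{(j, i). \<exists>s. (j, i, s) \<in> A} = range (\<lambda>j. (j, \<sigma> j)) \<longleftrightarrow>
      (\<forall>j i. (\<exists>s. (j, i, s) \<in> A) \<longleftrightarrow> i = \<sigma> j)" for \<sigma> :: "'a \<Rightarrow> 'a"
  proof -
    have "(j, i) \<in> range (\<lambda>j. (j, \<sigma> j)) \<longleftrightarrow> i = \<sigma> j" for j i
      by auto
    then show ?thesis
      by (simp add: set_eq_iff)
  qed
  have "(distinct vs \<and> set vs = UNIV \<and>
      {(j, i). \<exists>s. (j, i, s) \<in> A} = {(vs ! k, vs ! (Suc k mod length vs)) | k. k < length vs}) \<longleftrightarrow>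
    (distinct vs \<and> set vs = UNIV \<and> (\<forall>j i. (\<exists>s. (j, i, s) \<in> A) \<longleftrightarrow> i = cycle_of_list vs j))"
    for vs
  proof (cases "distinct vs \<and> set vs = UNIV")
    case True
    then show ?thesis
      using cycle_of_list_graph[of vs] graph[of "cycle_of_list vs"] by simp
  qed blast
  then show ?thesis
    unfolding hamiltonian_signed_cycle_def by presburger
qed

lemma hamiltonian_imp_perm_xor:
  fixes f :: "('v::finite \<Rightarrow> bool) \<Rightarrow> ('v \<Rightarrow> bool)"
  assumes "hamiltonian_signed_cycle (interaction_graph f)"
  obtains p c where "bij p" and "f = perm_xor p c"
proof -
  obtain vs where arcs: "\<And>j i. (\<exists>s. (j, i, s) \<in> interaction_graph f) \<longleftrightarrow> i = cycle_of_list vs j"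
    using assms unfolding hamiltonian_signed_cycle_iff by blast
  define p where "p = inv (cycle_of_list vs)"
  have "bij (cycle_of_list vs)"
    by (rule permutation_bijective[OF permutation_of_cycle])
  then have "bij p" and sensitive_iff: "(\<exists>x. f (x(j := True)) i \<noteq> f (x(j := False)) i) \<longleftrightarrow> j = p i" for i j
    using arcs[of j i] unfolding p_def interaction_arc_iff by (auto simp: bij_imp_bij_inv bij_inv_eq_iff)
  have "f x i = perm_xor p (f (\<lambda>_. False)) x i" for x i
  proof -
    have "f (y(k := True)) i = f (y(k := False)) i" if "k \<noteq> p i" for y k
      using sensitive_iff[of k i] that by blast
    moreover obtain z where "f (z(p i := True)) i \<noteq> f (z(p i := False)) i"
      using sensitive_iff by blast
    ultimately show ?thesis
      unfolding perm_xor_def by (rule boolean_function_of_one_coordinate[where g = "\<lambda>x. f x i"])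
  qed
  with \<open>bij p\<close> show thesis
    using that by blast
qed

section \<open>Permuted translations\<close>

lemma interaction_graph_perm_xor:
  "(j, i, s) \<in> interaction_graph (perm_xor p c) \<longleftrightarrow> j = p i \<and> s = (\<not> c i)"
  by (cases s) (auto simp: interaction_graph_def perm_xor_def)

lemma card_negative_arcs_perm_xor:
  "card (negative_arcs (interaction_graph (perm_xor p c))) = wt c"
proof -
  have "negative_arcs (interaction_graph (perm_xor p c)) = (\<lambda>i. (p i, i)) ` {i. c i}"
    by (auto simp: negative_arcs_def interaction_graph_perm_xor)
  moreover have "inj (\<lambda>i. (p i, i))"
    by (rule injI) simp
  ultimately show ?thesis
    by (simp add: card_image inj_on_subset wt_def)
qed

lemma perm_xor_self_dual: "self_dual (perm_xor p c)"
  by (simp add: self_dual_def perm_xor_def bxor_def ones_def fun_eq_iff)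

lemma wt_comp_bij: "bij p \<Longrightarrow> wt (x \<circ> p) = wt x"
  unfolding wt_def using card_vimage_inj[of p "{i. x i}"] by (simp add: bij_def vimage_def comp_def)

lemma hdist_perm_xor: "bij p \<Longrightarrow> hdist (perm_xor p c x) (perm_xor p c y) = hdist x y"
proof -
  assume "bij p"
  have "bxor (perm_xor p c x) (perm_xor p c y) = bxor x y \<circ> p"
    by (auto simp: bxor_def perm_xor_def)
  then show ?thesis
    unfolding hdist_def using wt_comp_bij[OF \<open>bij p\<close>] by simp
qed

lemma perm_xor_non_expansive: "bij p \<Longrightarrow> non_expansive (perm_xor p c)"
  by (simp add: non_expansive_def hdist_perm_xor)

definition only_constant_invariants :: "('v \<Rightarrow> 'v) \<Rightarrow> bool" where
  "only_constant_invariants p \<longleftrightarrow>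
     (\<forall>d :: 'v \<Rightarrow> bool. d \<circ> p = d \<longrightarrow> d = (\<lambda>_. False) \<or> d = (\<lambda>_. True))"

lemma only_constant_invariants_inv:
  assumes "bij p"
  shows "only_constant_invariants (inv p) \<longleftrightarrow> only_constant_invariants p"
proof -
  have "d \<circ> inv p = d \<longleftrightarrow> d \<circ> p = d" for d :: "'a \<Rightarrow> bool"
    using assms by (metis bij_is_inj bij_is_surj comp_id inv_o_cancel o_assoc surj_iff)
  then show ?thesis
    unfolding only_constant_invariants_def by simp
qed

lemma only_constant_invariants_iff_card:
  "only_constant_invariants p \<longleftrightarrow> card {d :: 'v::finite \<Rightarrow> bool. d \<circ> p = d} = 2"
proof -
  let ?K = "{d :: 'v \<Rightarrow> bool. d \<circ> p = d}"
  have constants: "{\<lambda>_. False, \<lambda>_. True} \<subseteq> ?K" and "(\<lambda>_::'v. False) \<noteq> (\<lambda>_. True)"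
    by (auto simp: fun_eq_iff)
  then have two: "card {\<lambda>_::'v. False, \<lambda>_. True} = 2"
    by simp
  have "only_constant_invariants p \<longleftrightarrow> ?K = {\<lambda>_. False, \<lambda>_. True}"
    unfolding only_constant_invariants_def using constants by auto
  also have "\<dots> \<longleftrightarrow> card ?K = 2"
    using card_subset_eq[OF finite constants] two by auto
  finally show ?thesis .
qed

lemma cycle_of_list_only_constant_invariants:
  assumes "distinct vs" and "set vs = UNIV"
  shows "only_constant_invariants (cycle_of_list vs)"
  unfolding only_constant_invariants_def
proof (intro allI impI)
  fix d :: "'a \<Rightarrow> bool"
  assume invariant: "d \<circ> cycle_of_list vs = d"
  have iterate: "d ((cycle_of_list vs ^^ n) x) = d x" for n x
    by (induction n) (simp_all add: fun_cong[OF invariant, simplified])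
  have "vs \<noteq> []"
    using assms(2) by auto
  have "d (vs ! k) = d (vs ! 0)" if "k < length vs" for k
  proof -
    have "vs ! k = rotate k vs ! 0"
      using \<open>vs \<noteq> []\<close> that by (simp add: nth_rotate)
    also have "\<dots> = (cycle_of_list vs ^^ k) (vs ! 0)"
      using cyclic_rotation[OF assms(1), of k] \<open>vs \<noteq> []\<close> by (metis length_greater_0_conv nth_map)
    finally show ?thesis
      using iterate by simp
  qed
  then have "d i = d (vs ! 0)" for i
    using assms(2) by (metis UNIV_I in_set_conv_nth)
  then show "d = (\<lambda>_. False) \<or> d = (\<lambda>_. True)"
    by (cases "d (vs ! 0)") auto
qed

lemma only_constant_invariants_imp_cycle_of_list:
  fixes q :: "'v::finite \<Rightarrow> 'v"
  assumes "bij q" and "only_constant_invariants q"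
  obtains vs where "distinct vs" and "set vs = UNIV" and "cycle_of_list vs = q"
proof -
  have "permutation q"
    using \<open>bij q\<close> by (simp add: permutation)
  obtain a :: 'v where True
    by blast
  define vs where "vs = support q a"
  define orbit where "orbit = set vs"
  have "distinct vs"
    unfolding vs_def by (rule cycle_of_permutation[OF \<open>permutation q\<close>])
  have orbit_eq: "orbit = range (\<lambda>i. (q ^^ i) a)"
    unfolding orbit_def vs_def by (rule support_set[OF \<open>permutation q\<close>])
  have "q ((q ^^ i) a) \<in> range (\<lambda>i. (q ^^ i) a)" for i
    using rangeI[of "\<lambda>i. (q ^^ i) a" "Suc i"] by simp
  then have "q ` orbit \<subseteq> orbit"
    unfolding orbit_eq by blast
  then have "q ` orbit = orbit"
    using \<open>bij q\<close> by (intro endo_inj_surj) (auto intro: inj_on_subset[OF bij_is_inj])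
  then have "q i \<in> orbit \<longleftrightarrow> i \<in> orbit" for i
    using inj_image_mem_iff[OF bij_is_inj[OF \<open>bij q\<close>], of i orbit] by simp
  then have "(\<lambda>i. i \<in> orbit) \<circ> q = (\<lambda>i. i \<in> orbit)"
    by (simp add: fun_eq_iff)
  moreover have "a \<in> orbit"
    unfolding orbit_eq by (metis funpow_0 rangeI)
  ultimately have "orbit = UNIV"
    using \<open>only_constant_invariants q\<close> unfolding only_constant_invariants_def by (metis UNIV_eq_I)
  moreover have "cycle_of_list vs = q"
  proof
    fix i
    have "i \<in> set (support q a)"
      using \<open>orbit = UNIV\<close> unfolding orbit_def vs_def by (metis UNIV_I)
    then show "cycle_of_list vs i = q i"
      unfolding vs_def by (rule cycle_restrict[OF \<open>permutation q\<close>, symmetric])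
  qed
  ultimately show thesis
    using that \<open>distinct vs\<close> unfolding orbit_def by blast
qed

lemma hamiltonian_perm_xor_iff:
  fixes p :: "'v::finite \<Rightarrow> 'v"
  assumes "bij p"
  shows "hamiltonian_signed_cycle (interaction_graph (perm_xor p c)) \<longleftrightarrow> only_constant_invariants p"
proof -
  have arcs: "(\<forall>j i. (\<exists>s. (j, i, s) \<in> interaction_graph (perm_xor p c)) \<longleftrightarrow> i = \<sigma> j) \<longleftrightarrow> \<sigma> = inv p"
    for \<sigma>
  proof -
    have "j = p i \<longleftrightarrow> i = inv p j" for i j
      using assms by (metis bij_inv_eq_iff)
    then show ?thesis
      by (auto simp: interaction_graph_perm_xor fun_eq_iff)
  qed
  have "hamiltonian_signed_cycle (interaction_graph (perm_xor p c)) \<longleftrightarrow>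
      (\<exists>vs. distinct vs \<and> set vs = UNIV \<and> cycle_of_list vs = inv p)"
    unfolding hamiltonian_signed_cycle_iff arcs by (simp add: interaction_graph_perm_xor)
  also have "\<dots> \<longleftrightarrow> only_constant_invariants (inv p)"
    using cycle_of_list_only_constant_invariants
      only_constant_invariants_imp_cycle_of_list[OF bij_imp_bij_inv[OF assms]] by metis
  also have "\<dots> \<longleftrightarrow> only_constant_invariants p"
    by (rule only_constant_invariants_inv[OF assms])
  finally show ?thesis .
qed

section \<open>Image of the conjugate\<close>

lemma even_wt_bxor: "even (wt (bxor a b)) \<longleftrightarrow> (even (wt a) \<longleftrightarrow> even (wt b))"
proof -
  let ?A = "{i. a i}" and ?B = "{i. b i}"
  have "wt (bxor a b) = card ((?A \<union> ?B) - (?A \<inter> ?B))"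
    unfolding wt_def by (rule arg_cong[where f = card]) (auto simp: bxor_def)
  also have "\<dots> = card (?A \<union> ?B) - card (?A \<inter> ?B)"
    by (rule card_Diff_subset) auto
  finally have "wt (bxor a b) = card (?A \<union> ?B) - card (?A \<inter> ?B)" .
  moreover have "card (?A \<union> ?B) + card (?A \<inter> ?B) = wt a + wt b"
    unfolding wt_def by (rule card_Un_Int[symmetric]) simp_all
  moreover have "card (?A \<inter> ?B) \<le> card (?A \<union> ?B)"
    by (rule card_mono) auto
  ultimately have "wt (bxor a b) + 2 * card (?A \<inter> ?B) = wt a + wt b"
    by linarith
  then show ?thesis
    by (metis even_add even_mult_iff even_numeral)
qed

lemma card_parity_class:
  "2 * card {x :: 'v::finite \<Rightarrow> bool. even (wt x) = b} = card (UNIV :: ('v \<Rightarrow> bool) set)"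
proof -
  let ?E = "{x :: 'v \<Rightarrow> bool. even (wt x) = b}" and ?O = "{x :: 'v \<Rightarrow> bool. even (wt x) = (\<not> b)}"
  obtain v :: 'v where True
    by blast
  define flip where "flip x = bxor x (\<lambda>i. i = v)" for x :: "'v \<Rightarrow> bool"
  have "flip (flip x) = x" for x
    by (auto simp: flip_def bxor_def)
  moreover have "even (wt (flip x)) \<longleftrightarrow> \<not> even (wt x)" for x
    unfolding flip_def even_wt_bxor by (simp add: wt_def)
  ultimately have "bij_betw flip ?E ?O"
    by (intro bij_betwI[where g = flip]) auto
  then have "card ?E = card ?O"
    by (rule bij_betw_same_card)
  moreover have "card (UNIV :: ('v \<Rightarrow> bool) set) = card (?E \<union> ?O)"
    by (rule arg_cong[where f = card]) auto
  moreover have "card (?E \<union> ?O) = card ?E + card ?O"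
    by (rule card_Un_disjoint) auto
  ultimately show ?thesis
    by simp
qed

lemma card_eq_card_image_mult_fiber:
  assumes "finite A" and "\<And>y. y \<in> F ` A \<Longrightarrow> card {x \<in> A. F x = y} = k"
  shows "card A = card (F ` A) * k"
proof -
  have "(\<Sum>x\<in>A. card {y \<in> F ` A. F x = y}) = k * card (F ` A)"
    using assms by (intro sum_multicount) auto
  moreover have "{y \<in> F ` A. F x = y} = {F x}" if "x \<in> A" for x
    using that by auto
  ultimately show ?thesis
    by simp
qed

lemma conjugate_perm_xor: "conjugate (perm_xor p c) x = bxor (bxor (x \<circ> p) x) c"
  by (auto simp: conjugate_def perm_xor_def bxor_def)

lemma even_wt_conjugate_perm_xor:
  "bij p \<Longrightarrow> even (wt (conjugate (perm_xor p c) x)) \<longleftrightarrow> even (wt c)"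
  by (simp add: conjugate_perm_xor even_wt_bxor wt_comp_bij)

lemma conjugate_perm_xor_eq_iff:
  "conjugate (perm_xor p c) x = conjugate (perm_xor p c) y \<longleftrightarrow> bxor x y \<circ> p = bxor x y"
  unfolding conjugate_def perm_xor_def bxor_def fun_eq_iff comp_def by blast

lemma card_range_conjugate_perm_xor:
  fixes p :: "'v::finite \<Rightarrow> 'v"
  shows "card (UNIV :: ('v \<Rightarrow> bool) set) =
    card (range (conjugate (perm_xor p c))) * card {d :: 'v \<Rightarrow> bool. d \<circ> p = d}"
proof (rule card_eq_card_image_mult_fiber)
  fix z assume "z \<in> range (conjugate (perm_xor p c))"
  then obtain x where z: "z = conjugate (perm_xor p c) x"
    by blast
  have "{y \<in> UNIV. conjugate (perm_xor p c) y = z} = bxor x ` {d. d \<circ> p = d}"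
  proof (intro set_eqI iffI)
    fix y assume "y \<in> {y \<in> UNIV. conjugate (perm_xor p c) y = z}"
    then have "bxor x y \<in> {d. d \<circ> p = d}"
      using z conjugate_perm_xor_eq_iff[of p c x y] by simp
    moreover have "y = bxor x (bxor x y)"
      by (auto simp: bxor_def)
    ultimately show "y \<in> bxor x ` {d. d \<circ> p = d}"
      by blast
  next
    fix y assume "y \<in> bxor x ` {d. d \<circ> p = d}"
    then obtain d where "d \<circ> p = d" and "y = bxor x d"
      by blast
    moreover have "bxor x (bxor x d) = d"
      by (auto simp: bxor_def)
    ultimately show "y \<in> {y \<in> UNIV. conjugate (perm_xor p c) y = z}"
      using z conjugate_perm_xor_eq_iff[of p c x y] by simp
  qed
  moreover have "inj (bxor x)"
    by (rule injI) (auto simp: bxor_def fun_eq_iff)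
  ultimately show "card {y \<in> UNIV. conjugate (perm_xor p c) y = z} = card {d :: 'v \<Rightarrow> bool. d \<circ> p = d}"
    by (simp add: card_image inj_on_subset)
qed simp

lemma range_conjugate_perm_xor_iff:
  fixes p :: "'v::finite \<Rightarrow> 'v"
  assumes "bij p"
  shows "range (conjugate (perm_xor p c)) = {x. even (wt x) = b} \<longleftrightarrow>
    only_constant_invariants p \<and> even (wt c) = b"
proof -
  let ?R = "range (conjugate (perm_xor p c))"
  let ?K = "{d :: 'v \<Rightarrow> bool. d \<circ> p = d}"
  let ?N = "card (UNIV :: ('v \<Rightarrow> bool) set)"
  have K_iff: "only_constant_invariants p \<longleftrightarrow> card ?K = 2"
    by (rule only_constant_invariants_iff_card)
  have "conjugate (perm_xor p c) (\<lambda>_. False) = c"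
    by (simp add: conjugate_perm_xor bxor_def comp_def)
  then have "c \<in> ?R"
    by (metis rangeI)
  then have "card ?R > 0"
    by (simp add: card_gt_0_iff)
  have R_sub: "?R \<subseteq> {x. even (wt x) = even (wt c)}"
    using even_wt_conjugate_perm_xor[OF assms] by auto
  have count: "?N = card ?R * card ?K"
    by (rule card_range_conjugate_perm_xor)
  have parity_class: "2 * card {x :: 'v \<Rightarrow> bool. even (wt x) = b} = ?N"
    by (rule card_parity_class)
  show ?thesis
  proof
    assume R: "?R = {x. even (wt x) = b}"
    have "card ?R * card ?K = card ?R * 2"
      using count parity_class unfolding R by linarith
    then have "card ?K = 2"
      using \<open>card ?R > 0\<close> by simp
    moreover have "even (wt c) = b"
      using \<open>c \<in> ?R\<close> R by auto
    ultimately show "only_constant_invariants p \<and> even (wt c) = b"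
      using K_iff by blast
  next
    assume H: "only_constant_invariants p \<and> even (wt c) = b"
    then have "card ?K = 2"
      using K_iff by blast
    then have "card ?R = card {x :: 'v \<Rightarrow> bool. even (wt x) = b}"
      using count parity_class by simp
    moreover have "?R \<subseteq> {x. even (wt x) = b}"
      using R_sub H by simp
    ultimately show "?R = {x. even (wt x) = b}"
      by (intro card_subset_eq) auto
  qed
qed

lemma circular_iff_parity_self_dual_non_expansive:
  fixes f :: "('v::finite \<Rightarrow> bool) \<Rightarrow> ('v \<Rightarrow> bool)"
  shows "(hamiltonian_signed_cycle (interaction_graph f) \<and>
      even (card (negative_arcs (interaction_graph f))) = b) \<longleftrightarrow>
    (range (conjugate f) = {x. even (wt x) = b} \<and> self_dual f \<and> non_expansive f)"
    (is "?circular \<longleftrightarrow> ?parity_self_dual")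
proof -
  have "\<exists>p c. bij p \<and> f = perm_xor p c" if "?circular \<or> ?parity_self_dual"
  proof (cases ?circular)
    case True
    then show ?thesis
      using hamiltonian_imp_perm_xor by metis
  next
    case False
    with that have "hdist (f x) (f y) = hdist x y" for x y
      using self_dual_non_expansive_imp_isometry by blast
    then show ?thesis
      using isometry_imp_perm_xor by metis
  qed
  moreover have "?circular \<longleftrightarrow> ?parity_self_dual" if "bij p" and "f = perm_xor p c" for p c
    using that by (simp add: hamiltonian_perm_xor_iff card_negative_arcs_perm_xor
        range_conjugate_perm_xor_iff perm_xor_self_dual perm_xor_non_expansive)
  ultimately show ?thesis
    by blast
qed

theorem theorem9:
  fixes f :: "('v::finite \<Rightarrow> bool) \<Rightarrow> ('v \<Rightarrow> bool)"
  shows "(positive_circular f \<longleftrightarrow> even_self_dual f \<and> non_expansive f) \<and>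
         (negative_circular f \<longleftrightarrow> odd_self_dual f \<and> non_expansive f)"
  using circular_iff_parity_self_dual_non_expansive[of f True]
    circular_iff_parity_self_dual_non_expansive[of f False]
  unfolding positive_circular_def negative_circular_def even_self_dual_def odd_self_dual_def
    even_map_def odd_map_def
  by auto

end
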